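(* Let $V$ be an infinite-dimensional left vector space over a field $K$. Then there exists an automorphism of the Grassmann graph on $\mathcal G$ (a bijection $\phi:\mathcal G\to\mathcal G$ with $X\sim Y\iff X^\phi\sim Y^\phi$) which is not an automorphism of the distant graph on $\mathcal G$; more precisely, there exist $P,Q\in\mathcal G$ with $P\oplus Q=V$ but $P^\phi\oplus Q^\phi\neq V$.
   Context: Fields are not necessarily commutative (division rings). $\mathcal G$ denotes the set of all subspaces $X\le V$ such that $X$ is isomorphic to $V/X$. Two elements $X,Y\in\mathcal G$ are distant if $X\oplus Y=V$, and adjacent ($X\sim Y$) if $\dim((X+Y)/X)=\dim((X+Y)/Y)=1$. The Grassmann graph (resp. distant graph) on $\mathcal G$ has vertex set $\mathcal G$ and edges the pairs of adjacent (resp. distant) elements. *)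

theory Defs
  imports Main
begin

text \<open>Left vector spaces over a (not necessarily commutative) division ring.
  The vector space V is the whole carrier type 'v, with scalar multiplication sm.\<close>

definition lvs :: "('k::division_ring \<Rightarrow> 'v::ab_group_add \<Rightarrow> 'v) \<Rightarrow> bool" where
  "lvs sm \<longleftrightarrow>
     (\<forall>a x y. sm a (x + y) = sm a x + sm a y) \<and>
     (\<forall>a b x. sm (a + b) x = sm a x + sm b x) \<and>
     (\<forall>a b x. sm (a * b) x = sm a (sm b x)) \<and>
     (\<forall>x. sm 1 x = x)"

definition lvs_subspace :: "('k::division_ring \<Rightarrow> 'v::ab_group_add \<Rightarrow> 'v) \<Rightarrow> 'v set \<Rightarrow> bool" where
  "lvs_subspace sm X \<longleftrightarrow> 0 \<in> X \<and> (\<forall>x\<in>X. \<forall>y\<in>X. x + y \<in> X) \<and> (\<forall>a. \<forall>x\<in>X. sm a x \<in> X)"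

definition lvs_span :: "('k::division_ring \<Rightarrow> 'v::ab_group_add \<Rightarrow> 'v) \<Rightarrow> 'v set \<Rightarrow> 'v set" where
  "lvs_span sm S = \<Inter> {W. lvs_subspace sm W \<and> S \<subseteq> W}"

definition lvs_fin_dim :: "('k::division_ring \<Rightarrow> 'v::ab_group_add \<Rightarrow> 'v) \<Rightarrow> bool" where
  "lvs_fin_dim sm \<longleftrightarrow> (\<exists>S. finite S \<and> lvs_span sm S = UNIV)"

definition set_sum :: "'v::ab_group_add set \<Rightarrow> 'v set \<Rightarrow> 'v set" where
  "set_sum X Y = {x + y | x y. x \<in> X \<and> y \<in> Y}"

text \<open>The coset x + X, i.e. an element of the quotient space V/X.\<close>
definition coset :: "'v::ab_group_add \<Rightarrow> 'v set \<Rightarrow> 'v set" where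
  "coset x X = {x + y | y. y \<in> X}"

text \<open>X is isomorphic to the quotient space V/X: there is a linear bijection
  from X onto the set of cosets of X (with the quotient-space operations).\<close>
definition iso_quot :: "('k::division_ring \<Rightarrow> 'v::ab_group_add \<Rightarrow> 'v) \<Rightarrow> 'v set \<Rightarrow> bool" where
  "iso_quot sm X \<longleftrightarrow> (\<exists>g. bij_betw g X (range (\<lambda>v. coset v X)) \<and>
      (\<forall>a\<in>X. \<forall>b\<in>X. \<forall>x y. g a = coset x X \<and> g b = coset y X \<longrightarrow> g (a + b) = coset (x + y) X) \<and>
      (\<forall>c. \<forall>a\<in>X. \<forall>x. g a = coset x X \<longrightarrow> g (sm c a) = coset (sm c x) X))"

definition calG :: "('k::division_ring \<Rightarrow> 'v::ab_group_add \<Rightarrow> 'v) \<Rightarrow> 'v set set" where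
  "calG sm = {X. lvs_subspace sm X \<and> iso_quot sm X}"

text \<open>For subspaces X \<subseteq> W: the quotient W/X is one-dimensional, i.e. spanned by a
  single nonzero element v + X.\<close>
definition quot_dim_one :: "('k::division_ring \<Rightarrow> 'v::ab_group_add \<Rightarrow> 'v) \<Rightarrow> 'v set \<Rightarrow> 'v set \<Rightarrow> bool" where
  "quot_dim_one sm W X \<longleftrightarrow> X \<subseteq> W \<and>
     (\<exists>v\<in>W. v \<notin> X \<and> (\<forall>w\<in>W. \<exists>c. w - sm c v \<in> X))"

definition distant :: "'v::ab_group_add set \<Rightarrow> 'v set \<Rightarrow> bool" where
  "distant X Y \<longleftrightarrow> X \<inter> Y = {0} \<and> set_sum X Y = UNIV"

definition adjacent :: "('k::division_ring \<Rightarrow> 'v::ab_group_add \<Rightarrow> 'v) \<Rightarrow> 'v set \<Rightarrow> 'v set \<Rightarrow> bool" where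
  "adjacent sm X Y \<longleftrightarrow> quot_dim_one sm (set_sum X Y) X \<and> quot_dim_one sm (set_sum X Y) Y"

end

(*
  Split a basis B of V into two halves B1, B2 of the same cardinality (B is infinite),
  exchanged by an involution \<sigma>. Then P = span B1 and Q = span B2 are complementary, and
  the linear involution induced by \<sigma> swaps them, so both lie in \<G>. Exchanging a single
  p \<in> B1 with \<sigma> p gives a linear involution f such that f P is adjacent to P but meets Q.
  Along an adjacency path the dimension changes by one at a time, so P lies in a finite
  extension of every subspace in its connected component of the Grassmann graph; as B1 is
  infinite this fails for Q. Hence applying f on the component of P and the identity
  elsewhere is an automorphism of the Grassmann graph which maps the distant pair P, Q to
  the pair f P, Q, which is not distant.
*)

theory Submission
  imports Defs
begin

definition supp :: "('a \<Rightarrow> 'k::zero) \<Rightarrow> 'a set" where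
  "supp c = {b. c b \<noteq> 0}"

lemma supp_comp_involution:
  assumes "\<And>x. \<pi> (\<pi> x) = x"
  shows "supp (\<lambda>b. c (\<pi> b)) = \<pi> ` supp c"
  unfolding supp_def using assms by (auto intro: image_eqI[of _ \<pi> "\<pi> _"])

lemma supp_add_subset: "supp (\<lambda>b. c b + d b :: 'k::ab_group_add) \<subseteq> supp c \<union> supp d"
  unfolding supp_def by auto

lemma supp_diff_subset: "supp (\<lambda>b. c b - d b :: 'k::ab_group_add) \<subseteq> supp c \<union> supp d"
  unfolding supp_def by auto

lemma supp_indicator: "supp (\<lambda>x. if x = b then (1::'k::zero_neq_one) else 0) = {b}"
  by (auto simp: supp_def)

lemma involution_image_subset_iff:
  assumes "\<And>x. \<pi> (\<pi> x) = x"
  shows "\<pi> ` A \<subseteq> C \<longleftrightarrow> A \<subseteq> \<pi> ` C"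
proof
  assume "\<pi> ` A \<subseteq> C"
  then have "\<pi> ` \<pi> ` A \<subseteq> \<pi> ` C" by (rule image_mono)
  then show "A \<subseteq> \<pi> ` C" by (simp add: image_image assms)
next
  assume "A \<subseteq> \<pi> ` C"
  then have "\<pi> ` A \<subseteq> \<pi> ` \<pi> ` C" by (rule image_mono)
  then show "\<pi> ` A \<subseteq> C" by (simp add: image_image assms)
qed

unbundle cardinal_syntax

lemma infinite_split_swap:
  assumes "infinite B"
  obtains B1 B2 \<sigma> where "B1 \<union> B2 = B" "B1 \<inter> B2 = {}" "infinite B1"
    "\<And>x. \<sigma> (\<sigma> x) = x" "\<sigma> ` B1 = B2"
proof -
  have "|B <+> B| =o |B|"
    using card_of_Plus_infinite1[OF assms] card_of_mono1[of B B] by blast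
  then obtain e where e: "bij_betw e (B <+> B) B" using card_of_ordIso by blast
  then have inj_e: "inj_on e (B <+> B)" and e_B: "e ` (B <+> B) = B" by (auto simp: bij_betw_def)
  define sw :: "'a + 'a \<Rightarrow> 'a + 'a" where "sw = case_sum Inr Inl"
  define \<sigma> where "\<sigma> x = (if x \<in> B then e (sw (inv_into (B <+> B) e x)) else x)" for x
  have sw_sw: "sw (sw s) = s" for s by (cases s) (simp_all add: sw_def)
  have sw_B: "s \<in> B <+> B \<Longrightarrow> sw s \<in> B <+> B" for s by (auto simp: sw_def)
  have \<sigma>_e: "\<sigma> (e s) = e (sw s)" if "s \<in> B <+> B" for s
    using that e_B inv_into_f_f[OF inj_e that] unfolding \<sigma>_def by auto
  have involutive: "\<sigma> (\<sigma> x) = x" for x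
  proof (cases "x \<in> B")
    case True
    then obtain s where "s \<in> B <+> B" "x = e s" using e_B by blast
    then show ?thesis using \<sigma>_e sw_B sw_sw by simp
  next
    case False
    then show ?thesis unfolding \<sigma>_def by simp
  qed
  have swap: "\<sigma> ` e ` Inl ` B = e ` Inr ` B"
    unfolding image_image using \<sigma>_e by (intro image_cong) (auto simp: sw_def Plus_def)
  have union: "e ` Inl ` B \<union> e ` Inr ` B = B"
    using e_B by (auto simp: Plus_def image_Un)
  have disjoint: "e ` Inl ` B \<inter> e ` Inr ` B = {}"
    using inj_on_image_Int[OF inj_e, of "Inl ` B" "Inr ` B"] by auto
  have "infinite (e ` Inl ` B)"
  proof -
    have "inj_on e (Inl ` B)" by (rule inj_on_subset[OF inj_e]) auto
    moreover have "infinite (Inl ` B)" using assms finite_imageD[of Inl B] by (auto simp: inj_on_def)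
    ultimately show ?thesis using finite_imageD by blast
  qed
  then show ?thesis using that[OF union disjoint _ involutive swap] by blast
qed

section \<open>Connected components of a graph\<close>

definition graph_component :: "'a set \<Rightarrow> ('a \<Rightarrow> 'a \<Rightarrow> bool) \<Rightarrow> 'a \<Rightarrow> 'a set" where
  "graph_component G adj P = {X. (P, X) \<in> {(X, Y). X \<in> G \<and> Y \<in> G \<and> adj X Y}\<^sup>*}"

lemma graph_component_induct [consumes 1, case_names base step]:
  assumes "X \<in> graph_component G adj P"
    and "R P"
    and "\<And>Y Z. Y \<in> graph_component G adj P \<Longrightarrow> Y \<in> G \<Longrightarrow> Z \<in> G \<Longrightarrow> adj Y Z \<Longrightarrow> R Y \<Longrightarrow> R Z"
  shows "R X"
  using assms(1) unfolding graph_component_def mem_Collect_eq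
proof (induction rule: rtrancl_induct)
  case base
  show ?case by (rule assms(2))
next
  case (step Y Z)
  then show ?case using assms(3)[of Y Z] unfolding graph_component_def by blast
qed

lemma graph_component_self: "P \<in> graph_component G adj P"
  unfolding graph_component_def by simp

lemma graph_component_subset: "P \<in> G \<Longrightarrow> graph_component G adj P \<subseteq> G"
  by (auto elim: graph_component_induct)

lemma graph_component_adj_closed:
  "X \<in> graph_component G adj P \<Longrightarrow> X \<in> G \<Longrightarrow> Y \<in> G \<Longrightarrow> adj X Y \<Longrightarrow> Y \<in> graph_component G adj P"
  unfolding graph_component_def by (auto intro: rtrancl_into_rtrancl)

(* f maps the component of P onto itself, because P and f P are adjacent. *)
lemma graph_automorphism_on_component:
  assumes sym: "\<And>X Y. adj X Y \<Longrightarrow> adj Y X"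
    and f_G: "\<And>X. X \<in> G \<Longrightarrow> f X \<in> G"
    and f_inv: "\<And>X. X \<in> G \<Longrightarrow> f (f X) = X"
    and f_adj: "\<And>X Y. X \<in> G \<Longrightarrow> Y \<in> G \<Longrightarrow> adj X Y \<Longrightarrow> adj (f X) (f Y)"
    and P: "P \<in> G" "adj P (f P)"
  defines "\<phi> \<equiv> \<lambda>X. if X \<in> graph_component G adj P then f X else X"
  shows "bij_betw \<phi> G G \<and> (\<forall>X\<in>G. \<forall>Y\<in>G. adj X Y \<longleftrightarrow> adj (\<phi> X) (\<phi> Y))"
proof -
  let ?C = "graph_component G adj P"
  have C_G: "?C \<subseteq> G" using P(1) by (rule graph_component_subset)
  have f_C: "f X \<in> ?C" if "X \<in> ?C" for X
    using that
  proof (induction rule: graph_component_induct)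
    case base
    show ?case
      using graph_component_adj_closed[OF graph_component_self[of P G adj] P(1) f_G[OF P(1)] P(2)] .
  next
    case (step Y Z)
    show ?case
      using graph_component_adj_closed[OF step.IH f_G[OF step(2)] f_G[OF step(3)] f_adj[OF step(2-4)]] .
  qed
  have \<phi>_G: "\<phi> X \<in> G" if "X \<in> G" for X
    using that f_G unfolding \<phi>_def by simp
  have \<phi>_inv: "\<phi> (\<phi> X) = X" if "X \<in> G" for X
    using that f_C f_inv unfolding \<phi>_def by auto
  have bij: "bij_betw \<phi> G G"
    by (rule bij_betw_byWitness[where f' = \<phi>]) (use \<phi>_G \<phi>_inv in auto)
  have adj_iff_f: "adj X Y \<longleftrightarrow> adj (f X) (f Y)" if "X \<in> G" "Y \<in> G" for X Y
    using that f_adj f_G f_inv by metis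
  have not_adj: "\<not> adj X Y" if "X \<in> ?C" "Y \<in> G" "Y \<notin> ?C" for X Y
    using graph_component_adj_closed[OF that(1) _ that(2)] that(1,3) C_G by blast
  have "\<forall>X\<in>G. \<forall>Y\<in>G. adj X Y \<longleftrightarrow> adj (\<phi> X) (\<phi> Y)"
  proof (intro ballI)
    fix X Y assume XY: "X \<in> G" "Y \<in> G"
    show "adj X Y \<longleftrightarrow> adj (\<phi> X) (\<phi> Y)"
    proof (cases "X \<in> ?C"; cases "Y \<in> ?C")
      assume "X \<in> ?C" "Y \<in> ?C"
      then show ?thesis using adj_iff_f[OF XY] by (simp add: \<phi>_def)
    next
      assume "X \<in> ?C" "Y \<notin> ?C"
      then show ?thesis using not_adj[of X Y] not_adj[of "f X" Y] f_C XY by (simp add: \<phi>_def)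
    next
      assume "X \<notin> ?C" "Y \<in> ?C"
      then show ?thesis using not_adj[of Y X] not_adj[of "f Y" X] f_C XY sym by (auto simp: \<phi>_def)
    next
      assume "X \<notin> ?C" "Y \<notin> ?C"
      then show ?thesis by (simp add: \<phi>_def)
    qed
  qed
  with bij show ?thesis ..
qed

section \<open>Left vector spaces\<close>

locale left_vector_space =
  fixes sm :: "'k::division_ring \<Rightarrow> 'v::ab_group_add \<Rightarrow> 'v"
  assumes lvs: "lvs sm"
begin

lemma sm_add_right: "sm a (x + y) = sm a x + sm a y"
  using lvs unfolding lvs_def by blast

lemma sm_add_left: "sm (a + b) x = sm a x + sm b x"
  using lvs unfolding lvs_def by blast

lemma sm_mult: "sm (a * b) x = sm a (sm b x)"
  using lvs unfolding lvs_def by blast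

lemma sm_one [simp]: "sm 1 x = x"
  using lvs unfolding lvs_def by blast

lemma sm_zero_left [simp]: "sm 0 x = 0"
  using sm_add_left[of 0 0 x] by simp

lemma sm_zero_right [simp]: "sm a 0 = 0"
  using sm_add_right[of a 0 0] by simp

lemma sm_minus_right: "sm a (- x) = - sm a x"
  using sm_add_right[of a x "- x"] by (metis add.right_inverse neg_eq_iff_add_eq_0 sm_zero_right)

lemma sm_diff_right: "sm a (x - y) = sm a x - sm a y"
  using sm_add_right[of a x "- y"] by (simp add: sm_minus_right)

lemma sm_minus_left: "sm (- a) x = - sm a x"
  using sm_add_left[of a "- a" x] by (metis add.right_inverse neg_eq_iff_add_eq_0 sm_zero_left)

lemma sm_sum: "sm a (sum g T) = (\<Sum>x\<in>T. sm a (g x))"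
  by (induction T rule: infinite_finite_induct) (auto simp: sm_add_right)

lemma subspace_0: "lvs_subspace sm X \<Longrightarrow> 0 \<in> X"
  unfolding lvs_subspace_def by blast

lemma subspace_add: "lvs_subspace sm X \<Longrightarrow> x \<in> X \<Longrightarrow> y \<in> X \<Longrightarrow> x + y \<in> X"
  unfolding lvs_subspace_def by blast

lemma subspace_sm: "lvs_subspace sm X \<Longrightarrow> x \<in> X \<Longrightarrow> sm a x \<in> X"
  unfolding lvs_subspace_def by blast

lemma subspace_minus: "lvs_subspace sm X \<Longrightarrow> x \<in> X \<Longrightarrow> - x \<in> X"
  using subspace_sm[of X x "- 1"] by (simp add: sm_minus_left)

lemma subspace_diff: "lvs_subspace sm X \<Longrightarrow> x \<in> X \<Longrightarrow> y \<in> X \<Longrightarrow> x - y \<in> X"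
  using subspace_add[of X x "- y"] subspace_minus by simp

lemma subspace_sum: "lvs_subspace sm X \<Longrightarrow> (\<And>x. x \<in> T \<Longrightarrow> g x \<in> X) \<Longrightarrow> sum g T \<in> X"
  by (induction T rule: infinite_finite_induct) (auto simp: subspace_0 subspace_add)

lemma subspace_span: "lvs_subspace sm (lvs_span sm S)"
  unfolding lvs_span_def lvs_subspace_def by auto

lemma span_superset: "S \<subseteq> lvs_span sm S"
  unfolding lvs_span_def by auto

lemma span_minimal: "lvs_subspace sm W \<Longrightarrow> S \<subseteq> W \<Longrightarrow> lvs_span sm S \<subseteq> W"
  unfolding lvs_span_def by auto

lemma span_subset_span: "S \<subseteq> lvs_span sm T \<Longrightarrow> lvs_span sm S \<subseteq> lvs_span sm T"
  by (rule span_minimal[OF subspace_span])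

lemma span_mono: "S \<subseteq> T \<Longrightarrow> lvs_span sm S \<subseteq> lvs_span sm T"
  using span_subset_span span_superset by blast

lemma set_sum_commute: "set_sum X Y = set_sum Y X"
  unfolding set_sum_def by (auto simp: add.commute) (metis add.commute)+

lemma subset_set_sum_left: "0 \<in> Y \<Longrightarrow> X \<subseteq> set_sum X Y"
  unfolding set_sum_def by (metis (mono_tags, lifting) add.right_neutral mem_Collect_eq subsetI)

lemma subspace_set_sum:
  assumes X: "lvs_subspace sm X" and Y: "lvs_subspace sm Y"
  shows "lvs_subspace sm (set_sum X Y)"
  unfolding lvs_subspace_def
proof (intro conjI ballI allI)
  show "0 \<in> set_sum X Y"
    using subspace_0[OF X] subspace_0[OF Y] unfolding set_sum_def by force
next
  fix u v assume "u \<in> set_sum X Y" "v \<in> set_sum X Y"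
  then obtain x y x' y' where "x \<in> X" "y \<in> Y" "x' \<in> X" "y' \<in> Y" "u = x + y" "v = x' + y'"
    unfolding set_sum_def by blast
  then have "u + v = (x + x') + (y + y')" "x + x' \<in> X" "y + y' \<in> Y"
    by (auto simp: algebra_simps X Y subspace_add)
  then show "u + v \<in> set_sum X Y" unfolding set_sum_def by blast
next
  fix a u assume "u \<in> set_sum X Y"
  then obtain x y where "x \<in> X" "y \<in> Y" "u = x + y" unfolding set_sum_def by blast
  then have "sm a u = sm a x + sm a y" "sm a x \<in> X" "sm a y \<in> Y"
    by (auto simp: sm_add_right X Y subspace_sm)
  then show "sm a u \<in> set_sum X Y" unfolding set_sum_def by blast
qed

lemma set_sum_span: "set_sum (lvs_span sm S) (lvs_span sm T) = lvs_span sm (S \<union> T)"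
proof
  show "set_sum (lvs_span sm S) (lvs_span sm T) \<subseteq> lvs_span sm (S \<union> T)"
  proof
    fix v assume "v \<in> set_sum (lvs_span sm S) (lvs_span sm T)"
    then obtain x y where "x \<in> lvs_span sm S" "y \<in> lvs_span sm T" "v = x + y"
      unfolding set_sum_def by blast
    moreover have "lvs_span sm S \<subseteq> lvs_span sm (S \<union> T)" "lvs_span sm T \<subseteq> lvs_span sm (S \<union> T)"
      by (simp_all add: span_mono)
    ultimately show "v \<in> lvs_span sm (S \<union> T)" using subspace_add[OF subspace_span] by blast
  qed
  have "lvs_span sm S \<subseteq> set_sum (lvs_span sm S) (lvs_span sm T)"
    "lvs_span sm T \<subseteq> set_sum (lvs_span sm T) (lvs_span sm S)"
    by (simp_all add: subset_set_sum_left subspace_0[OF subspace_span])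
  then have "S \<union> T \<subseteq> set_sum (lvs_span sm S) (lvs_span sm T)"
    using span_superset[of S] span_superset[of T] set_sum_commute by blast
  then show "lvs_span sm (S \<union> T) \<subseteq> set_sum (lvs_span sm S) (lvs_span sm T)"
    by (rule span_minimal[OF subspace_set_sum[OF subspace_span subspace_span]])
qed

lemma coset_eq_iff: "lvs_subspace sm X \<Longrightarrow> coset x X = coset y X \<longleftrightarrow> x - y \<in> X"
proof
  assume X: "lvs_subspace sm X" and e: "coset x X = coset y X"
  have "x \<in> coset y X"
    using e subspace_0[OF X] unfolding coset_def by force
  then show "x - y \<in> X" unfolding coset_def by auto
next
  assume X: "lvs_subspace sm X" and d: "x - y \<in> X"
  have "x + z \<in> coset y X" if "z \<in> X" for z
  proof -
    have "x + z = y + ((x - y) + z)" by simp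
    then show ?thesis unfolding coset_def using subspace_add[OF X d that] by blast
  qed
  moreover have "y + z \<in> coset x X" if "z \<in> X" for z
  proof -
    have "y + z = x + (z - (x - y))" by simp
    then show ?thesis unfolding coset_def using subspace_diff[OF X that d] by blast
  qed
  ultimately show "coset x X = coset y X" unfolding coset_def by blast
qed

definition lincomb :: "('v \<Rightarrow> 'k) \<Rightarrow> 'v" where
  "lincomb c = (\<Sum>b\<in>supp c. sm (c b) b)"

definition fin_supp :: "'v set \<Rightarrow> ('v \<Rightarrow> 'k) \<Rightarrow> bool" where
  "fin_supp S c \<longleftrightarrow> finite (supp c) \<and> supp c \<subseteq> S"

definition independent :: "'v set \<Rightarrow> bool" where
  "independent B \<longleftrightarrow> (\<forall>c. fin_supp B c \<and> lincomb c = 0 \<longrightarrow> (\<forall>b. c b = 0))"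

lemma fin_supp_add: "fin_supp S c \<Longrightarrow> fin_supp S d \<Longrightarrow> fin_supp S (\<lambda>b. c b + d b)"
  unfolding fin_supp_def using supp_add_subset[of c d] by (meson finite_Un finite_subset le_sup_iff order_trans)

lemma fin_supp_diff: "fin_supp S c \<Longrightarrow> fin_supp S d \<Longrightarrow> fin_supp S (\<lambda>b. c b - d b)"
  unfolding fin_supp_def using supp_diff_subset[of c d] by (meson finite_Un finite_subset le_sup_iff order_trans)

lemma fin_supp_mult: "fin_supp S c \<Longrightarrow> fin_supp S (\<lambda>b. a * c b)"
  unfolding fin_supp_def supp_def by (auto elim!: finite_subset[rotated])

lemma fin_supp_mono: "fin_supp S c \<Longrightarrow> S \<subseteq> T \<Longrightarrow> fin_supp T c"
  unfolding fin_supp_def by blast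

lemma lincomb_eq_sum: "finite T \<Longrightarrow> supp c \<subseteq> T \<Longrightarrow> lincomb c = (\<Sum>b\<in>T. sm (c b) b)"
  unfolding lincomb_def by (rule sum.mono_neutral_left) (auto simp: supp_def)

lemma lincomb_add:
  assumes "finite (supp c)" "finite (supp d)"
  shows "lincomb (\<lambda>b. c b + d b) = lincomb c + lincomb d"
proof -
  let ?T = "supp c \<union> supp d"
  have "lincomb (\<lambda>b. c b + d b) = (\<Sum>b\<in>?T. sm (c b + d b) b)"
    using assms by (intro lincomb_eq_sum) (auto simp: supp_def)
  also have "\<dots> = (\<Sum>b\<in>?T. sm (c b) b) + (\<Sum>b\<in>?T. sm (d b) b)"
    by (simp add: sm_add_left sum.distrib)
  also have "\<dots> = lincomb c + lincomb d"
    using assms lincomb_eq_sum[of ?T c] lincomb_eq_sum[of ?T d] by auto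
  finally show ?thesis .
qed

lemma lincomb_mult:
  assumes "finite (supp c)"
  shows "lincomb (\<lambda>b. a * c b) = sm a (lincomb c)"
proof -
  have "lincomb (\<lambda>b. a * c b) = (\<Sum>b\<in>supp c. sm (a * c b) b)"
    using assms by (intro lincomb_eq_sum) (auto simp: supp_def)
  then show ?thesis by (simp add: lincomb_def sm_sum sm_mult)
qed

lemma lincomb_minus: "lincomb (\<lambda>b. - c b) = - lincomb c"
  unfolding lincomb_def supp_def by (simp add: sm_minus_left sum_negf)

lemma lincomb_diff:
  "finite (supp c) \<Longrightarrow> finite (supp d) \<Longrightarrow> lincomb (\<lambda>b. c b - d b) = lincomb c - lincomb d"
  using lincomb_add[of c "\<lambda>b. - d b"] lincomb_minus[of d] by (simp add: supp_def)

lemma lincomb_zero [simp]: "lincomb (\<lambda>b. 0) = 0"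
  unfolding lincomb_def supp_def by simp

lemma lincomb_indicator: "lincomb (\<lambda>x. if x = b then 1 else 0) = b"
  unfolding lincomb_def supp_indicator by simp

lemma lincomb_in_span: "fin_supp S c \<Longrightarrow> lincomb c \<in> lvs_span sm S"
  unfolding lincomb_def fin_supp_def supp_def
  by (intro subspace_sum[OF subspace_span] subspace_sm[OF subspace_span]) (use span_superset in blast)

lemma span_eq_lincombs: "lvs_span sm S = {lincomb c | c. fin_supp S c}"
proof
  let ?W = "{lincomb c | c. fin_supp S c}"
  show "?W \<subseteq> lvs_span sm S" using lincomb_in_span by blast
  have "lvs_subspace sm ?W"
    unfolding lvs_subspace_def
  proof (intro conjI ballI allI)
    show "0 \<in> ?W"
      by (intro CollectI exI[of _ "\<lambda>_. 0"]) (simp add: fin_supp_def supp_def)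
  next
    fix x y assume "x \<in> ?W" "y \<in> ?W"
    then obtain c d where "fin_supp S c" "x = lincomb c" "fin_supp S d" "y = lincomb d" by blast
    moreover have "lincomb (\<lambda>b. c b + d b) = lincomb c + lincomb d"
      using \<open>fin_supp S c\<close> \<open>fin_supp S d\<close> lincomb_add unfolding fin_supp_def by blast
    ultimately show "x + y \<in> ?W" using fin_supp_add by (metis (mono_tags, lifting) CollectI)
  next
    fix a x assume "x \<in> ?W"
    then obtain c where "fin_supp S c" "x = lincomb c" by blast
    moreover have "lincomb (\<lambda>b. a * c b) = sm a (lincomb c)"
      using \<open>fin_supp S c\<close> lincomb_mult unfolding fin_supp_def by blast
    ultimately show "sm a x \<in> ?W" using fin_supp_mult by (metis (mono_tags, lifting) CollectI)
  qed
  moreover have "S \<subseteq> ?W"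
  proof
    fix s assume "s \<in> S"
    then have "fin_supp S (\<lambda>x. if x = s then 1 else 0)"
      by (simp add: fin_supp_def supp_indicator)
    then show "s \<in> ?W" using lincomb_indicator[of s] by force
  qed
  ultimately show "lvs_span sm S \<subseteq> ?W" by (rule span_minimal)
qed

lemma mem_span_iff_lincomb: "v \<in> lvs_span sm S \<longleftrightarrow> (\<exists>c. fin_supp S c \<and> lincomb c = v)"
  unfolding span_eq_lincombs by blast

lemma independent_Union_chain:
  assumes "C \<in> chains {B. independent B}"
  shows "independent (\<Union>C)"
  unfolding independent_def
proof (intro allI impI)
  fix c b assume c: "fin_supp (\<Union>C) c \<and> lincomb c = 0"
  show "c b = 0"
  proof (cases "supp c = {}")
    case True then show ?thesis by (auto simp: supp_def)
  next
    case False
    have "subset.chain {B. independent B} C" using assms by (simp add: chains_alt_def)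
    then obtain B where "B \<in> C" "supp c \<subseteq> B"
      using finite_subset_Union_chain[of "supp c" C] c False unfolding fin_supp_def by blast
    moreover have "C \<subseteq> {B. independent B}" using assms by (simp add: chains_def)
    ultimately show ?thesis using c unfolding independent_def fin_supp_def by blast
  qed
qed

lemma independent_insert:
  assumes M: "independent M" and v: "v \<notin> lvs_span sm M"
  shows "independent (insert v M)"
  unfolding independent_def
proof (intro allI impI)
  fix c b assume c: "fin_supp (insert v M) c \<and> lincomb c = 0"
  show "c b = 0"
  proof (cases "c v = 0")
    case True
    then have "fin_supp M c" using c unfolding fin_supp_def supp_def by auto
    then show ?thesis using M c unfolding independent_def by blast
  next
    case False
    define d where "d = c(v := 0)"
    have supp_d: "supp d = supp c - {v}" unfolding d_def supp_def by auto
    have "fin_supp M d" using c supp_d unfolding fin_supp_def by auto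
    have "finite (supp c)" "v \<in> supp c" using c False unfolding fin_supp_def supp_def by auto
    then have "lincomb c = sm (c v) v + (\<Sum>b\<in>supp c - {v}. sm (c b) b)"
      unfolding lincomb_def by (rule sum.remove)
    also have "(\<Sum>b\<in>supp c - {v}. sm (c b) b) = lincomb d"
      unfolding lincomb_def supp_d by (rule sum.cong) (auto simp: d_def)
    finally have "sm (c v) v = - lincomb d" using c by (simp add: eq_neg_iff_add_eq_0)
    then have "v = sm (inverse (c v)) (- lincomb d)"
      using False by (metis left_inverse sm_mult sm_one)
    also have "\<dots> \<in> lvs_span sm M"
      by (intro subspace_sm[OF subspace_span] subspace_minus[OF subspace_span]
          lincomb_in_span \<open>fin_supp M d\<close>)
    finally show ?thesis using v by blast
  qed
qed

lemma basis_exists: "\<exists>B. independent B \<and> lvs_span sm B = UNIV"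
proof -
  have "\<forall>C\<in>chains {B. independent B}. \<Union>C \<in> {B. independent B}"
    using independent_Union_chain by blast
  then obtain M where M: "independent M" and max: "\<forall>X. independent X \<and> M \<subseteq> X \<longrightarrow> X = M"
    using Zorn_Lemma[of "{B. independent B}"] by blast
  have "v \<in> lvs_span sm M" for v
    using independent_insert[OF M, of v] max span_superset by blast
  then show ?thesis using M by blast
qed

section \<open>Linear involutions\<close>

definition linear_involution :: "('v \<Rightarrow> 'v) \<Rightarrow> bool" where
  "linear_involution f \<longleftrightarrow>
     (\<forall>x y. f (x + y) = f x + f y) \<and> (\<forall>a x. f (sm a x) = sm a (f x)) \<and> (\<forall>x. f (f x) = x)"

lemma linear_involution_add: "linear_involution f \<Longrightarrow> f (x + y) = f x + f y"
  unfolding linear_involution_def by blast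

lemma linear_involution_sm: "linear_involution f \<Longrightarrow> f (sm a x) = sm a (f x)"
  unfolding linear_involution_def by blast

lemma linear_involution_involutive: "linear_involution f \<Longrightarrow> f (f x) = x"
  unfolding linear_involution_def by blast

lemma linear_involution_diff: "linear_involution f \<Longrightarrow> f (x - y) = f x - f y"
  using linear_involution_sm[of f "- 1" y] linear_involution_add[of f x "- y"]
  by (simp add: sm_minus_left)

lemma linear_involution_zero: "linear_involution f \<Longrightarrow> f 0 = 0"
  using linear_involution_diff[of f 0 0] by simp

lemma linear_involution_image_image: "linear_involution f \<Longrightarrow> f ` f ` X = X"
  by (simp add: image_image linear_involution_involutive)

lemma linear_involution_mem_image_iff:
  assumes "linear_involution f"
  shows "y \<in> f ` X \<longleftrightarrow> f y \<in> X"
proof -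
  have "y \<in> f ` X \<longleftrightarrow> f y \<in> f ` f ` X"
    using linear_involution_involutive[OF assms] by (metis image_eqI imageE)
  then show ?thesis by (simp add: linear_involution_image_image[OF assms])
qed

lemma linear_involution_bij_betw: "linear_involution f \<Longrightarrow> bij_betw f X (f ` X)"
  by (metis inj_on_inverseI linear_involution_involutive inj_on_imp_bij_betw)

lemma linear_involution_image_subspace:
  assumes f: "linear_involution f" and X: "lvs_subspace sm X"
  shows "lvs_subspace sm (f ` X)"
  unfolding lvs_subspace_def linear_involution_mem_image_iff[OF f]
  using X f by (simp add: linear_involution_add linear_involution_sm linear_involution_zero
      linear_involution_involutive subspace_0 subspace_add subspace_sm)

lemma linear_involution_image_set_sum:
  assumes f: "linear_involution f"
  shows "f ` set_sum X Y = set_sum (f ` X) (f ` Y)"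
proof
  show "f ` set_sum X Y \<subseteq> set_sum (f ` X) (f ` Y)"
    unfolding set_sum_def using linear_involution_add[OF f] by blast
  show "set_sum (f ` X) (f ` Y) \<subseteq> f ` set_sum X Y"
  proof
    fix z assume "z \<in> set_sum (f ` X) (f ` Y)"
    then obtain x y where "x \<in> X" "y \<in> Y" "z = f (x + y)"
      unfolding set_sum_def using linear_involution_add[OF f] by auto
    then show "z \<in> f ` set_sum X Y" unfolding set_sum_def by blast
  qed
qed

lemma linear_involution_image_coset:
  assumes f: "linear_involution f"
  shows "f ` coset x X = coset (f x) (f ` X)"
proof
  show "f ` coset x X \<subseteq> coset (f x) (f ` X)"
    unfolding coset_def using linear_involution_add[OF f] by blast
  show "coset (f x) (f ` X) \<subseteq> f ` coset x X"
  proof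
    fix z assume "z \<in> coset (f x) (f ` X)"
    then obtain y where "y \<in> X" "z = f (x + y)"
      unfolding coset_def using linear_involution_add[OF f] by auto
    then show "z \<in> f ` coset x X" unfolding coset_def by blast
  qed
qed

lemma linear_involution_image_quot_dim_one:
  assumes f: "linear_involution f" and q: "quot_dim_one sm W X"
  shows "quot_dim_one sm (f ` W) (f ` X)"
proof -
  obtain v where "X \<subseteq> W" and v: "v \<in> W" "v \<notin> X" "\<forall>w\<in>W. \<exists>c. w - sm c v \<in> X"
    using q unfolding quot_dim_one_def by (elim conjE bexE)
  have "\<exists>c. w - sm c (f v) \<in> f ` X" if "w \<in> f ` W" for w
  proof -
    have "f w \<in> W" using that by (simp add: linear_involution_mem_image_iff[OF f])
    then obtain c where "f w - sm c v \<in> X" using v(3) by blast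
    then have "f (w - sm c (f v)) \<in> X"
      by (simp add: linear_involution_diff[OF f] linear_involution_sm[OF f]
          linear_involution_involutive[OF f])
    then show ?thesis by (auto simp: linear_involution_mem_image_iff[OF f])
  qed
  moreover have "f v \<in> f ` W" "f v \<notin> f ` X"
    using v linear_involution_mem_image_iff[OF f] linear_involution_involutive[OF f] by auto
  ultimately show ?thesis using \<open>X \<subseteq> W\<close> unfolding quot_dim_one_def by blast
qed

lemma linear_involution_image_adjacent:
  "linear_involution f \<Longrightarrow> adjacent sm X Y \<Longrightarrow> adjacent sm (f ` X) (f ` Y)"
  unfolding adjacent_def
  by (simp flip: linear_involution_image_set_sum add: linear_involution_image_quot_dim_one)

lemma linear_involution_image_cosets:
  assumes f: "linear_involution f"
  shows "bij_betw ((`) f) (range (\<lambda>v. coset v X)) (range (\<lambda>v. coset v (f ` X)))"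
proof (rule bij_betw_byWitness[where f' = "(`) f"])
  show "\<forall>S\<in>range (\<lambda>v. coset v X). f ` f ` S = S"
    "\<forall>S\<in>range (\<lambda>v. coset v (f ` X)). f ` f ` S = S"
    using linear_involution_image_image[OF f] by blast+
  show "(`) f ` range (\<lambda>v. coset v X) \<subseteq> range (\<lambda>v. coset v (f ` X))"
    using linear_involution_image_coset[OF f] by auto
  show "(`) f ` range (\<lambda>v. coset v (f ` X)) \<subseteq> range (\<lambda>v. coset v X)"
    using linear_involution_image_coset[OF f] linear_involution_image_image[OF f] by auto
qed

lemma linear_involution_image_iso_quot:
  assumes f: "linear_involution f" and X: "iso_quot sm X"
  shows "iso_quot sm (f ` X)"
proof -
  obtain g where g: "bij_betw g X (range (\<lambda>v. coset v X))"
    and g_add: "\<forall>a\<in>X. \<forall>b\<in>X. \<forall>x y. g a = coset x X \<and> g b = coset y X \<longrightarrow> g (a + b) = coset (x + y) X"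
    and g_sm: "\<forall>c. \<forall>a\<in>X. \<forall>x. g a = coset x X \<longrightarrow> g (sm c a) = coset (sm c x) X"
    using X unfolding iso_quot_def by blast
  define g' where "g' = (\<lambda>a. f ` g (f a))"
  have "bij_betw f (f ` X) X"
    using linear_involution_bij_betw[OF f, of "f ` X"] by (simp add: linear_involution_image_image[OF f])
  then have bij: "bij_betw g' (f ` X) (range (\<lambda>v. coset v (f ` X)))"
    unfolding g'_def using bij_betw_trans[OF bij_betw_trans[OF _ g] linear_involution_image_cosets[OF f]]
    by (simp add: comp_def)
  have g'_coset: "g (f a) = coset (f x) X" if "g' a = coset x (f ` X)" for a x
  proof -
    have "f ` f ` g (f a) = f ` coset x (f ` X)" using that unfolding g'_def by simp
    then show ?thesis
      by (simp add: linear_involution_image_coset[OF f] linear_involution_image_image[OF f]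
          linear_involution_involutive[OF f])
  qed
  have coset_g': "g (f a) = coset (f x) X \<Longrightarrow> g' a = coset x (f ` X)" for a x
    unfolding g'_def by (simp add: linear_involution_image_coset[OF f] linear_involution_involutive[OF f])
  have "g' (a + b) = coset (x + y) (f ` X)"
    if "a \<in> f ` X" "b \<in> f ` X" "g' a = coset x (f ` X)" "g' b = coset y (f ` X)" for a b x y
  proof (rule coset_g')
    have "f a \<in> X" "f b \<in> X" using that(1,2) linear_involution_mem_image_iff[OF f] by blast+
    moreover have "g (f a) = coset (f x) X" "g (f b) = coset (f y) X" using that(3,4) g'_coset by blast+
    ultimately have "g (f a + f b) = coset (f x + f y) X" using g_add by blast
    then show "g (f (a + b)) = coset (f (x + y)) X" by (simp add: linear_involution_add[OF f])
  qed
  moreover have "g' (sm c a) = coset (sm c x) (f ` X)"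
    if "a \<in> f ` X" "g' a = coset x (f ` X)" for c a x
  proof (rule coset_g')
    have "f a \<in> X" using that(1) linear_involution_mem_image_iff[OF f] by blast
    moreover have "g (f a) = coset (f x) X" using that(2) g'_coset by blast
    ultimately have "g (sm c (f a)) = coset (sm c (f x)) X" using g_sm by blast
    then show "g (f (sm c a)) = coset (f (sm c x)) X" by (simp add: linear_involution_sm[OF f])
  qed
  ultimately show ?thesis unfolding iso_quot_def using bij by blast
qed

lemma linear_involution_image_calG:
  "linear_involution f \<Longrightarrow> X \<in> calG sm \<Longrightarrow> f ` X \<in> calG sm"
  unfolding calG_def
  using linear_involution_image_subspace linear_involution_image_iso_quot by blast

section \<open>The Grassmann graph\<close>

lemma distant_commute: "distant X Y \<longleftrightarrow> distant Y X"
  unfolding distant_def by (simp add: set_sum_commute Int_commute)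

lemma adjacent_commute: "adjacent sm X Y \<longleftrightarrow> adjacent sm Y X"
  unfolding adjacent_def by (simp add: set_sum_commute conj_commute)

lemma bij_betw_complement_cosets:
  assumes P: "lvs_subspace sm P" and Q: "lvs_subspace sm Q" and PQ: "distant P Q"
  shows "bij_betw (\<lambda>q. coset q P) Q (range (\<lambda>v. coset v P))"
proof (rule bij_betw_imageI)
  show "inj_on (\<lambda>q. coset q P) Q"
  proof (rule inj_onI)
    fix x y assume "x \<in> Q" "y \<in> Q" "coset x P = coset y P"
    then have "x - y \<in> P \<inter> Q" using coset_eq_iff[OF P] subspace_diff[OF Q] by blast
    then show "x = y" using PQ unfolding distant_def by simp
  qed
  show "(\<lambda>q. coset q P) ` Q = range (\<lambda>v. coset v P)"
  proof
    show "range (\<lambda>v. coset v P) \<subseteq> (\<lambda>q. coset q P) ` Q"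
    proof
      fix S assume "S \<in> range (\<lambda>v. coset v P)"
      then obtain v where S: "S = coset v P" by blast
      obtain p q where "p \<in> P" "q \<in> Q" "v = p + q"
        using PQ unfolding distant_def set_sum_def by blast
      then have "S = coset q P" unfolding S using coset_eq_iff[OF P] by simp
      with \<open>q \<in> Q\<close> show "S \<in> (\<lambda>q. coset q P) ` Q" by blast
    qed
  qed blast
qed

(* The isomorphism P \<rightarrow> V/P is x \<mapsto> t x + P: t maps P onto the complement Q,
   which the projection identifies with V/P. *)
lemma iso_quot_if_involution_swaps_complement:
  assumes P: "lvs_subspace sm P" and PQ: "distant P Q"
    and t: "linear_involution t" and tP: "t ` P = Q"
  shows "iso_quot sm P"
proof -
  define g where "g = (\<lambda>x. coset (t x) P)"
  have g_eq_iff: "g a = coset x P \<longleftrightarrow> t a - x \<in> P" for a x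
    unfolding g_def by (rule coset_eq_iff[OF P])
  have "lvs_subspace sm Q" using linear_involution_image_subspace[OF t P] tP by simp
  then have "bij_betw ((\<lambda>q. coset q P) \<circ> t) P (range (\<lambda>v. coset v P))"
    using linear_involution_bij_betw[OF t, of P] bij_betw_complement_cosets[OF P _ PQ] tP
    by (blast intro: bij_betw_trans)
  then have "bij_betw g P (range (\<lambda>v. coset v P))" by (simp add: g_def comp_def)
  moreover have "g (a + b) = coset (x + y) P"
    if "a \<in> P" "b \<in> P" "g a = coset x P" "g b = coset y P" for a b x y
  proof -
    have "(t a - x) + (t b - y) \<in> P" using that g_eq_iff subspace_add[OF P] by blast
    then show ?thesis by (simp add: g_eq_iff linear_involution_add[OF t] algebra_simps)
  qed
  moreover have "g (sm c a) = coset (sm c x) P" if "a \<in> P" "g a = coset x P" for c a x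
  proof -
    have "sm c (t a - x) \<in> P" using that g_eq_iff subspace_sm[OF P] by blast
    then show ?thesis by (simp add: g_eq_iff linear_involution_sm[OF t] sm_diff_right)
  qed
  ultimately show ?thesis unfolding iso_quot_def by blast
qed

lemma calG_if_involution_swaps_complement:
  assumes "lvs_subspace sm P" "distant P Q" "linear_involution t" "t ` P = Q"
  shows "P \<in> calG sm"
  using iso_quot_if_involution_swaps_complement[OF assms] assms(1) unfolding calG_def by blast

lemma quot_dim_one_subset_span_insert:
  assumes "quot_dim_one sm W Y"
  obtains u where "W \<subseteq> lvs_span sm (insert u Y)"
proof -
  obtain u where "\<forall>w\<in>W. \<exists>c. w - sm c u \<in> Y"
    using assms unfolding quot_dim_one_def by (elim conjE bexE)
  have "W \<subseteq> lvs_span sm (insert u Y)"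
  proof
    fix w assume "w \<in> W"
    then obtain c where "w - sm c u \<in> Y" using \<open>\<forall>w\<in>W. _\<close> by blast
    then have "w - sm c u \<in> lvs_span sm (insert u Y)" "sm c u \<in> lvs_span sm (insert u Y)"
      using span_superset subspace_sm[OF subspace_span] by blast+
    then show "w \<in> lvs_span sm (insert u Y)" using subspace_add[OF subspace_span] by fastforce
  qed
  then show ?thesis by (rule that)
qed

(* Each step along an adjacency adds one vector to F. *)
lemma grassmann_component_finite_extension:
  assumes "X \<in> graph_component (calG sm) (adjacent sm) P"
  shows "\<exists>F. finite F \<and> P \<subseteq> lvs_span sm (X \<union> F)"
  using assms
proof (induction rule: graph_component_induct)
  case base
  have "P \<subseteq> lvs_span sm (P \<union> {})" using span_superset by blast
  then show ?case by blast
next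
  case (step Y Z)
  then obtain F where F: "finite F" "P \<subseteq> lvs_span sm (Y \<union> F)" by blast
  obtain u where u: "set_sum Y Z \<subseteq> lvs_span sm (insert u Z)"
    using step(4) unfolding adjacent_def by (elim conjE quot_dim_one_subset_span_insert)
  have "Y \<subseteq> set_sum Y Z"
    using step(3) subset_set_sum_left subspace_0 unfolding calG_def by blast
  also have "\<dots> \<subseteq> lvs_span sm (Z \<union> insert u F)"
    using u span_mono[of "insert u Z" "Z \<union> insert u F"] by blast
  finally have "lvs_span sm (Y \<union> F) \<subseteq> lvs_span sm (Z \<union> insert u F)"
    using span_superset[of "Z \<union> insert u F"] by (intro span_subset_span) blast
  then show ?case using F by blast
qed

lemma grassmann_automorphism_not_distant_preserving:
  assumes P: "P \<in> calG sm" and Q: "Q \<in> calG sm" and PQ: "distant P Q"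
    and f: "linear_involution f" and adj: "adjacent sm P (f ` P)" and not_distant: "\<not> distant (f ` P) Q"
    and no_extension: "\<And>F. finite F \<Longrightarrow> \<not> P \<subseteq> lvs_span sm (Q \<union> F)"
  shows "\<exists>\<phi>. bij_betw \<phi> (calG sm) (calG sm) \<and>
           (\<forall>X\<in>calG sm. \<forall>Y\<in>calG sm. adjacent sm X Y \<longleftrightarrow> adjacent sm (\<phi> X) (\<phi> Y)) \<and>
           (\<exists>P\<in>calG sm. \<exists>Q\<in>calG sm. distant P Q \<and> \<not> distant (\<phi> P) (\<phi> Q))"
proof -
  let ?C = "graph_component (calG sm) (adjacent sm) P"
  define \<phi> where "\<phi> = (\<lambda>X. if X \<in> ?C then f ` X else X)"
  have "\<And>X Y. adjacent sm X Y \<Longrightarrow> adjacent sm Y X" using adjacent_commute by blast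
  then have automorphism: "bij_betw \<phi> (calG sm) (calG sm) \<and>
      (\<forall>X\<in>calG sm. \<forall>Y\<in>calG sm. adjacent sm X Y \<longleftrightarrow> adjacent sm (\<phi> X) (\<phi> Y))"
    unfolding \<phi>_def
    by (rule graph_automorphism_on_component[of "adjacent sm" "calG sm" "(`) f" P,
          OF _ linear_involution_image_calG[OF f]
          linear_involution_image_image[OF f] linear_involution_image_adjacent[OF f] P adj])
  have "Q \<notin> ?C" using grassmann_component_finite_extension no_extension by blast
  then have "distant P Q \<and> \<not> distant (\<phi> P) (\<phi> Q)"
    using PQ not_distant graph_component_self by (simp add: \<phi>_def)
  then have "\<exists>P\<in>calG sm. \<exists>Q\<in>calG sm. distant P Q \<and> \<not> distant (\<phi> P) (\<phi> Q)"
    using P Q by blast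
  with automorphism show ?thesis by blast
qed

end

section \<open>Spaces with a basis\<close>

locale left_vector_space_basis =
  left_vector_space sm for sm :: "'k::division_ring \<Rightarrow> 'v::ab_group_add \<Rightarrow> 'v" +
  fixes B :: "'v set"
  assumes independent_basis: "independent B" and span_basis: "lvs_span sm B = UNIV"
begin

definition coord :: "'v \<Rightarrow> 'v \<Rightarrow> 'k" where
  "coord v = (SOME c. fin_supp B c \<and> lincomb c = v)"

lemma fin_supp_coord: "fin_supp B (coord v)"
  and lincomb_coord [simp]: "lincomb (coord v) = v"
proof -
  have "\<exists>c. fin_supp B c \<and> lincomb c = v" using span_basis mem_span_iff_lincomb by blast
  then have "fin_supp B (coord v) \<and> lincomb (coord v) = v" unfolding coord_def by (rule someI_ex)
  then show "fin_supp B (coord v)" "lincomb (coord v) = v" by blast+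
qed

lemma coord_unique: "fin_supp B c \<Longrightarrow> lincomb c = v \<Longrightarrow> coord v = c"
proof -
  assume c: "fin_supp B c" "lincomb c = v"
  have "lincomb (\<lambda>b. coord v b - c b) = 0"
    using c fin_supp_coord[of v] lincomb_diff unfolding fin_supp_def by simp
  then have "\<forall>b. coord v b - c b = 0"
    using independent_basis fin_supp_diff[OF fin_supp_coord c(1)] unfolding independent_def by blast
  then show ?thesis by auto
qed

lemma coord_inject: "coord v = coord w \<Longrightarrow> v = w"
  by (metis lincomb_coord)

lemma coord_add: "coord (v + w) = (\<lambda>b. coord v b + coord w b)"
  using fin_supp_coord[of v] fin_supp_coord[of w]
  by (intro coord_unique fin_supp_add) (auto simp: lincomb_add fin_supp_def)

lemma coord_diff: "coord (v - w) = (\<lambda>b. coord v b - coord w b)"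
  using fin_supp_coord[of v] fin_supp_coord[of w]
  by (intro coord_unique fin_supp_diff) (auto simp: lincomb_diff fin_supp_def)

lemma coord_sm: "coord (sm a v) = (\<lambda>b. a * coord v b)"
  using fin_supp_coord[of v]
  by (intro coord_unique fin_supp_mult) (auto simp: lincomb_mult fin_supp_def)

lemma coord_zero: "coord 0 = (\<lambda>b. 0)"
  by (intro coord_unique) (auto simp: fin_supp_def supp_def)

lemma coord_basis: "b \<in> B \<Longrightarrow> coord b = (\<lambda>x. if x = b then 1 else 0)"
  by (intro coord_unique) (auto simp: fin_supp_def supp_indicator lincomb_indicator)

lemma basis_nonzero: "b \<in> B \<Longrightarrow> b \<noteq> 0"
  using coord_basis[of b] coord_zero by (metis zero_neq_one)

lemma mem_span_iff_supp_coord: "B' \<subseteq> B \<Longrightarrow> v \<in> lvs_span sm B' \<longleftrightarrow> supp (coord v) \<subseteq> B'"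
proof
  assume "B' \<subseteq> B" "v \<in> lvs_span sm B'"
  then obtain c where "fin_supp B' c" "lincomb c = v" using mem_span_iff_lincomb by blast
  with \<open>B' \<subseteq> B\<close> have "coord v = c" using coord_unique fin_supp_mono by blast
  then show "supp (coord v) \<subseteq> B'" using \<open>fin_supp B' c\<close> by (simp add: fin_supp_def)
next
  assume "supp (coord v) \<subseteq> B'"
  then have "fin_supp B' (coord v)" using fin_supp_coord[of v] by (simp add: fin_supp_def)
  then show "v \<in> lvs_span sm B'" using lincomb_in_span by fastforce
qed

(* For an involution \<pi> of B this is the linear map sending each b \<in> B to \<pi> b; the
   coefficient of b in the image is the coefficient of \<pi>\<inverse> b = \<pi> b. *)
definition basis_perm :: "('v \<Rightarrow> 'v) \<Rightarrow> 'v \<Rightarrow> 'v" where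
  "basis_perm \<pi> v = lincomb (\<lambda>b. coord v (\<pi> b))"

context
  fixes \<pi> :: "'v \<Rightarrow> 'v"
  assumes involutive: "\<And>x. \<pi> (\<pi> x) = x" and basis_closed: "\<pi> ` B \<subseteq> B"
begin

lemma coord_basis_perm: "coord (basis_perm \<pi> v) = (\<lambda>b. coord v (\<pi> b))"
proof (rule coord_unique[folded basis_perm_def])
  have "supp (\<lambda>b. coord v (\<pi> b)) = \<pi> ` supp (coord v)"
    using involutive by (rule supp_comp_involution)
  then show "fin_supp B (\<lambda>b. coord v (\<pi> b))"
    using fin_supp_coord[of v] basis_closed unfolding fin_supp_def by auto
qed (simp add: basis_perm_def)

lemma linear_involution_basis_perm: "linear_involution (basis_perm \<pi>)"
  unfolding linear_involution_def
  by (auto intro!: coord_inject simp: coord_basis_perm coord_add coord_sm involutive)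

lemma basis_perm_image_span:
  assumes "B' \<subseteq> B"
  shows "basis_perm \<pi> ` lvs_span sm B' = lvs_span sm (\<pi> ` B')"
proof -
  have "\<pi> ` B' \<subseteq> B" using assms basis_closed by blast
  have "w \<in> basis_perm \<pi> ` lvs_span sm B' \<longleftrightarrow> w \<in> lvs_span sm (\<pi> ` B')" for w
  proof -
    have "w \<in> basis_perm \<pi> ` lvs_span sm B' \<longleftrightarrow> supp (\<lambda>b. coord w (\<pi> b)) \<subseteq> B'"
      by (simp add: linear_involution_mem_image_iff[OF linear_involution_basis_perm]
          mem_span_iff_supp_coord[OF assms] coord_basis_perm)
    also have "\<dots> \<longleftrightarrow> supp (coord w) \<subseteq> \<pi> ` B'"
      by (simp add: supp_comp_involution involutive involution_image_subset_iff)
    also have "\<dots> \<longleftrightarrow> w \<in> lvs_span sm (\<pi> ` B')"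
      by (simp add: mem_span_iff_supp_coord[OF \<open>\<pi> ` B' \<subseteq> B\<close>])
    finally show ?thesis .
  qed
  then show ?thesis by blast
qed

end

lemma quot_dim_one_span_insert:
  assumes S: "S \<subseteq> B" and b: "b \<in> B" "b \<notin> S"
  shows "quot_dim_one sm (lvs_span sm (insert b S)) (lvs_span sm S)"
  unfolding quot_dim_one_def
proof (intro conjI bexI ballI)
  show "lvs_span sm S \<subseteq> lvs_span sm (insert b S)" by (rule span_mono) blast
  show "b \<in> lvs_span sm (insert b S)" using span_superset by blast
  show "b \<notin> lvs_span sm S"
    using b by (simp add: mem_span_iff_supp_coord[OF S] coord_basis[OF b(1)] supp_indicator)
  fix w assume "w \<in> lvs_span sm (insert b S)"
  then have "supp (coord w) \<subseteq> insert b S"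
    using S b by (simp add: mem_span_iff_supp_coord)
  then have "supp (coord (w - sm (coord w b) b)) \<subseteq> S"
    by (auto simp: coord_diff coord_sm coord_basis[OF b(1)] supp_def)
  then show "\<exists>c. w - sm c b \<in> lvs_span sm S"
    using S by (auto simp: mem_span_iff_supp_coord)
qed

lemma adjacent_span_exchange:
  assumes B': "B' \<subseteq> B" and p: "p \<in> B'" and q: "q \<in> B" "q \<notin> B'"
  shows "adjacent sm (lvs_span sm B') (lvs_span sm (insert q (B' - {p})))"
proof -
  have sum: "set_sum (lvs_span sm B') (lvs_span sm (insert q (B' - {p}))) = lvs_span sm (insert q B')"
  proof -
    have "B' \<union> insert q (B' - {p}) = insert q B'" by blast
    then show ?thesis by (simp add: set_sum_span)
  qed
  have "insert q B' = insert p (insert q (B' - {p}))" using p by blast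
  moreover have "insert q (B' - {p}) \<subseteq> B" "p \<notin> insert q (B' - {p})" using B' p q by auto
  ultimately show ?thesis
    unfolding adjacent_def sum using B' p q
    by (metis quot_dim_one_span_insert subsetD)
qed

lemma distant_span_partition:
  assumes "B1 \<union> B2 = B" "B1 \<inter> B2 = {}"
  shows "distant (lvs_span sm B1) (lvs_span sm B2)"
  unfolding distant_def
proof
  have "supp (coord v) = {}" if "v \<in> lvs_span sm B1" "v \<in> lvs_span sm B2" for v
  proof -
    have "B1 \<subseteq> B" "B2 \<subseteq> B" using assms(1) by blast+
    then have "supp (coord v) \<subseteq> B1" "supp (coord v) \<subseteq> B2"
      using that by (simp_all add: mem_span_iff_supp_coord)
    then show ?thesis using assms(2) by blast
  qed
  then have "v = 0" if "v \<in> lvs_span sm B1 \<inter> lvs_span sm B2" for v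
    using that coord_inject[of v 0] by (auto simp: coord_zero supp_def)
  then show "lvs_span sm B1 \<inter> lvs_span sm B2 = {0}"
    using subspace_0[OF subspace_span] by blast
  show "set_sum (lvs_span sm B1) (lvs_span sm B2) = UNIV"
    by (simp add: set_sum_span assms span_basis)
qed

(* Only finitely many coordinates of the vectors in F are nonzero, so some basis vector
   in the infinite set B1 is missed by all of them. *)
lemma span_infinite_not_subset_finite_extension:
  assumes B1: "B1 \<subseteq> B" "infinite B1" and F: "finite F"
  shows "\<not> lvs_span sm B1 \<subseteq> lvs_span sm (lvs_span sm (B - B1) \<union> F)"
proof
  assume subset: "lvs_span sm B1 \<subseteq> lvs_span sm (lvs_span sm (B - B1) \<union> F)"
  have "finite (\<Union>x\<in>F. supp (coord x))"
    using F fin_supp_coord unfolding fin_supp_def by blast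
  then obtain b where b: "b \<in> B1" "b \<notin> (\<Union>x\<in>F. supp (coord x))"
    using B1(2) by (meson finite_subset subsetI)
  define W where "W = {v. coord v b = 0}"
  have W: "lvs_subspace sm W"
    unfolding lvs_subspace_def W_def by (simp add: coord_add coord_sm coord_zero)
  have "B - B1 \<subseteq> W" using b(1) by (auto simp: W_def coord_basis)
  then have "lvs_span sm (B - B1) \<union> F \<subseteq> W"
    using span_minimal[OF W] b(2) unfolding W_def supp_def by blast
  then have "b \<in> W" using subset span_superset[of B1] b(1) span_minimal[OF W] by blast
  then show False using b(1) B1(1) by (auto simp: W_def coord_basis)
qed

lemma calG_span_swapped_halves:
  assumes "B1 \<union> B2 = B" "B1 \<inter> B2 = {}" "\<And>x. \<sigma> (\<sigma> x) = x" "\<sigma> ` B1 = B2"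
  shows "lvs_span sm B1 \<in> calG sm" and "lvs_span sm B2 \<in> calG sm"
    and "distant (lvs_span sm B1) (lvs_span sm B2)"
proof -
  have "\<sigma> ` B2 = B1" using assms(3,4) by (auto simp: image_image)
  then have "\<sigma> ` B \<subseteq> B" using assms(1,4) by blast
  then have \<tau>: "linear_involution (basis_perm \<sigma>)"
    and \<tau>_span: "\<And>B'. B' \<subseteq> B \<Longrightarrow> basis_perm \<sigma> ` lvs_span sm B' = lvs_span sm (\<sigma> ` B')"
    using assms(3) by (simp_all add: linear_involution_basis_perm basis_perm_image_span)
  have B1: "B1 \<subseteq> B" and B2: "B2 \<subseteq> B" using assms(1) by blast+
  show distant: "distant (lvs_span sm B1) (lvs_span sm B2)"
    using assms(1,2) by (rule distant_span_partition)
  show "lvs_span sm B1 \<in> calG sm"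
    using \<tau>_span[OF B1] assms(4)
    by (intro calG_if_involution_swaps_complement[OF subspace_span distant \<tau>]) simp
  show "lvs_span sm B2 \<in> calG sm"
    using \<tau>_span[OF B2] \<open>\<sigma> ` B2 = B1\<close> distant
    by (intro calG_if_involution_swaps_complement[OF subspace_span _ \<tau>]) (simp_all add: distant_commute)
qed

lemma basis_transposition_adjacent_not_distant:
  assumes B1: "B1 \<subseteq> B" and p: "p \<in> B1" and q: "q \<in> B" "q \<notin> B1"
  defines "f \<equiv> basis_perm (id(p := q, q := p))"
  shows "linear_involution f" and "adjacent sm (lvs_span sm B1) (f ` lvs_span sm B1)"
    and "\<not> distant (f ` lvs_span sm B1) (lvs_span sm (B - B1))"
proof -
  let ?\<pi> = "id(p := q, q := p)"
  have \<pi>: "\<And>x. ?\<pi> (?\<pi> x) = x" "?\<pi> ` B \<subseteq> B" using p q B1 by auto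
  show "linear_involution f" unfolding f_def using \<pi> by (rule linear_involution_basis_perm)
  have "f ` lvs_span sm B1 = lvs_span sm (insert q (B1 - {p}))"
  proof -
    have "?\<pi> ` B1 = insert q (B1 - {p})" using p q by auto
    then show ?thesis unfolding f_def using basis_perm_image_span[OF \<pi> B1] by simp
  qed
  then show "adjacent sm (lvs_span sm B1) (f ` lvs_span sm B1)"
    using adjacent_span_exchange[OF B1 p q] by simp
  have "q \<in> f ` lvs_span sm B1" "q \<in> lvs_span sm (B - B1)"
    using \<open>f ` lvs_span sm B1 = _\<close> span_superset q by blast+
  then show "\<not> distant (f ` lvs_span sm B1) (lvs_span sm (B - B1))"
    using basis_nonzero[OF q(1)] unfolding distant_def by blast
qed

end

theorem mainTheorem5:
  fixes sm :: "'k::division_ring \<Rightarrow> 'v::ab_group_add \<Rightarrow> 'v"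
  assumes "lvs sm"
    and "\<not> lvs_fin_dim sm"
  shows "\<exists>\<phi>. bij_betw \<phi> (calG sm) (calG sm) \<and>
           (\<forall>X\<in>calG sm. \<forall>Y\<in>calG sm. adjacent sm X Y \<longleftrightarrow> adjacent sm (\<phi> X) (\<phi> Y)) \<and>
           (\<exists>P\<in>calG sm. \<exists>Q\<in>calG sm. distant P Q \<and> \<not> distant (\<phi> P) (\<phi> Q))"
proof -
  interpret left_vector_space sm using assms(1) by unfold_locales
  obtain B where "independent B" "lvs_span sm B = UNIV" using basis_exists by blast
  then interpret left_vector_space_basis sm B by unfold_locales
  have "infinite B" using assms(2) span_basis unfolding lvs_fin_dim_def by blast
  then obtain B1 B2 \<sigma> where split: "B1 \<union> B2 = B" "B1 \<inter> B2 = {}" "infinite B1"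
    "\<And>x. \<sigma> (\<sigma> x) = x" "\<sigma> ` B1 = B2"
    by (rule infinite_split_swap) auto
  obtain p where p: "p \<in> B1" using split(3) by (metis finite.emptyI ex_in_conv)
  have B1: "B1 \<subseteq> B" and B2: "B2 = B - B1" and q: "\<sigma> p \<in> B" "\<sigma> p \<notin> B1"
    using split p by auto
  show ?thesis
  proof (rule grassmann_automorphism_not_distant_preserving[OF
        calG_span_swapped_halves[OF split(1,2,4,5), unfolded B2]
        basis_transposition_adjacent_not_distant[OF B1 p q]])
    fix F :: "'v set"
    assume "finite F"
    then show "\<not> lvs_span sm B1 \<subseteq> lvs_span sm (lvs_span sm (B - B1) \<union> F)"
      by (rule span_infinite_not_subset_finite_extension[OF B1 split(3)])
  qed
qed

end
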